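(* For all $m$, $n\le m$ and $0<\rho<n$, $$K_{\mathrm R}(q^m,n,\rho)\le\frac{q^{mn}}{V_\rho(q^m,n)}\left[1+\ln\big(V_\rho(q^m,n)\big)\right].$$
   Context: The rank $\mathrm{rk}(\mathbf x)$ of $\mathbf x\in\mathrm{GF}(q^m)^n$ is the maximum number of its coordinates linearly independent over $\mathrm{GF}(q)$, and $d_{\mathrm R}(\mathbf x,\mathbf y)=\mathrm{rk}(\mathbf x-\mathbf y)$. $K_{\mathrm R}(q^m,n,\rho)$ is the minimum cardinality of a code in $\mathrm{GF}(q^m)^n$ with rank covering radius $\rho$ (covering radius $=\max_{\mathbf x}\min_{\mathbf c\in C}d_{\mathrm R}(\mathbf x,\mathbf c)$). $V_\rho(q^m,n)=\sum_{u=0}^\rho{n\brack u}\alpha(m,u)$ with $\alpha(m,0)=1$, $\alpha(m,u)=\prod_{i=0}^{u-1}(q^m-q^i)$, ${n\brack u}=\alpha(n,u)/\alpha(u,u)$. *)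

theory Defs
  imports Complex_Main
begin

text \<open>GF(q^m) is modelled by a finite field type 'a; GF(q) by a subfield K of 'a
  with card K = q.  Vectors of GF(q^m)^n are functions nat => 'a vanishing outside {0..<n}.\<close>

definition is_subfield :: "'a::field set \<Rightarrow> bool" where
  "is_subfield K \<longleftrightarrow> 0 \<in> K \<and> 1 \<in> K \<and> (\<forall>a\<in>K. \<forall>b\<in>K. a + b \<in> K \<and> a * b \<in> K)
     \<and> (\<forall>a\<in>K. - a \<in> K) \<and> (\<forall>a\<in>K. a \<noteq> 0 \<longrightarrow> inverse a \<in> K)"

definition vecs :: "nat \<Rightarrow> (nat \<Rightarrow> 'a::zero) set" where
  "vecs n = {x. \<forall>i. n \<le> i \<longrightarrow> x i = 0}"

definition lin_indep_over :: "'a::field set \<Rightarrow> (nat \<Rightarrow> 'a) \<Rightarrow> nat set \<Rightarrow> bool" where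
  "lin_indep_over K x S \<longleftrightarrow>
     (\<forall>c. (\<forall>i\<in>S. c i \<in> K) \<longrightarrow> (\<Sum>i\<in>S. c i * x i) = 0 \<longrightarrow> (\<forall>i\<in>S. c i = 0))"

definition rk :: "'a::field set \<Rightarrow> nat \<Rightarrow> (nat \<Rightarrow> 'a) \<Rightarrow> nat" where
  "rk K n x = Max {card S | S. S \<subseteq> {0..<n} \<and> lin_indep_over K x S}"

definition d_R :: "'a::field set \<Rightarrow> nat \<Rightarrow> (nat \<Rightarrow> 'a) \<Rightarrow> (nat \<Rightarrow> 'a) \<Rightarrow> nat" where
  "d_R K n x y = rk K n (\<lambda>i. x i - y i)"

definition covering_radius :: "'a::field set \<Rightarrow> nat \<Rightarrow> (nat \<Rightarrow> 'a) set \<Rightarrow> nat" where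
  "covering_radius K n C = Max ((\<lambda>x. Min ((\<lambda>c. d_R K n x c) ` C)) ` vecs n)"

text \<open>Minimum cardinality of a (nonempty) code in GF(q^m)^n with rank covering radius rho
  (read as: covering radius at most rho, the standard covering-code convention).\<close>
definition K_R :: "'a::{field,finite} set \<Rightarrow> nat \<Rightarrow> nat \<Rightarrow> nat" where
  "K_R K n \<rho> = Min {card C | C. C \<subseteq> vecs n \<and> C \<noteq> {} \<and> covering_radius K n C \<le> \<rho>}"

definition alpha :: "nat \<Rightarrow> nat \<Rightarrow> nat \<Rightarrow> real" where
  "alpha q m u = (\<Prod>i<u. (real q ^ m - real q ^ i))"

definition gauss_binom :: "nat \<Rightarrow> nat \<Rightarrow> nat \<Rightarrow> real" where
  "gauss_binom q n u = alpha q n u / alpha q u u"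

definition V :: "nat \<Rightarrow> nat \<Rightarrow> nat \<Rightarrow> nat \<Rightarrow> real" where
  "V q m n \<rho> = (\<Sum>u=0..\<rho>. gauss_binom q n u * alpha q m u)"

end

theory Submission
  imports Defs "HOL-Analysis.Convex"
begin

(* All rank balls of radius rho in GF(q^m)^n have the same size W = V_rho(q^m,n): the map
   c |-> x - c carries the ball around x onto the ball around 0, and counting the vectors of
   rank u coordinate by coordinate (a new coordinate either lies in the GF(q)-span of the
   previous ones, q^u choices, or not, q^m - q^u choices) reproduces the recursion of the
   Gaussian binomials. Among all s-tuples of centres in the N = q^(mn) vectors, one leaves at
   most the average number N (1 - W/N)^s of vectors uncovered; adding those as codewords gives a
   covering code of size at most s + N (1 - W/N)^s, and s = ceiling((N/W) ln W) makes this at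
   most (N/W) (1 + ln W). *)

section \<open>Covering with randomly chosen centres\<close>

lemma card_uncovered_sum:
  fixes U :: "'b set" and covers :: "'b \<Rightarrow> 'b \<Rightarrow> bool"
  assumes U: "finite U"
    and ball_card: "\<And>x. x \<in> U \<Longrightarrow> card {c \<in> U. covers c x} = W"
  shows "(\<Sum>\<sigma>\<in>PiE {..<s} (\<lambda>_. U). card {x \<in> U. \<forall>i<s. \<not> covers (\<sigma> i) x})
    = card U * (card U - W) ^ s"
proof -
  let ?P = "PiE {..<s} (\<lambda>_. U)"
  have "(\<Sum>\<sigma>\<in>?P. card {x \<in> U. \<forall>i<s. \<not> covers (\<sigma> i) x})
      = (\<Sum>\<sigma>\<in>?P. \<Sum>x\<in>U. of_bool (\<forall>i<s. \<not> covers (\<sigma> i) x))"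
    using U by (simp add: Int_def)
  also have "\<dots> = (\<Sum>x\<in>U. \<Sum>\<sigma>\<in>?P. of_bool (\<forall>i<s. \<not> covers (\<sigma> i) x))"
    by (rule sum.swap)
  also have "\<dots> = (\<Sum>x\<in>U. card {\<sigma> \<in> ?P. \<forall>i<s. \<not> covers (\<sigma> i) x})"
    using U by (simp add: Int_def finite_PiE)
  also have "\<dots> = (\<Sum>x\<in>U. (card U - W) ^ s)"
  proof (rule sum.cong[OF refl])
    fix x assume "x \<in> U"
    have "{c \<in> U. \<not> covers c x} = U - {c \<in> U. covers c x}"
      by blast
    then have "card {c \<in> U. \<not> covers c x} = card U - W"
      using U ball_card[OF \<open>x \<in> U\<close>] by (simp add: card_Diff_subset)
    moreover have "{\<sigma> \<in> ?P. \<forall>i<s. \<not> covers (\<sigma> i) x} = PiE {..<s} (\<lambda>_. {c \<in> U. \<not> covers c x})"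
      by (rule set_eqI) (simp add: PiE_iff, blast)
    ultimately show "card {\<sigma> \<in> ?P. \<forall>i<s. \<not> covers (\<sigma> i) x} = (card U - W) ^ s"
      by (simp add: card_PiE)
  qed
  finally show ?thesis by simp
qed

lemma exists_covering_subset:
  fixes U :: "'b set" and covers :: "'b \<Rightarrow> 'b \<Rightarrow> bool" and s :: nat
  assumes U: "finite U" "U \<noteq> {}"
    and covers_refl: "\<And>x. x \<in> U \<Longrightarrow> covers x x"
    and ball_card: "\<And>x. x \<in> U \<Longrightarrow> card {c \<in> U. covers c x} = W"
  obtains C where "C \<subseteq> U" "C \<noteq> {}" "\<And>x. x \<in> U \<Longrightarrow> \<exists>c\<in>C. covers c x"
    "real (card C) \<le> real s + real (card U) * (1 - real W / real (card U)) ^ s"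
proof -
  define P where "P = PiE {..<s} (\<lambda>_. U)"
  define unc where "unc \<sigma> = {x \<in> U. \<forall>i<s. \<not> covers (\<sigma> i) x}" for \<sigma>
  have P: "finite P" "P \<noteq> {}" "card P = card U ^ s"
    using U by (auto simp: P_def finite_PiE card_PiE PiE_eq_empty_iff)
  obtain x0 where "x0 \<in> U"
    using U(2) by blast
  then have "W \<le> card U"
    using ball_card[of x0] card_mono[OF U(1), of "{c \<in> U. covers c x0}"] by auto
  have "Min ((\<lambda>\<sigma>. card (unc \<sigma>)) ` P) \<in> (\<lambda>\<sigma>. card (unc \<sigma>)) ` P"
    using P by (intro Min_in) auto
  then obtain \<sigma> where \<sigma>: "\<sigma> \<in> P" "card (unc \<sigma>) = Min ((\<lambda>\<sigma>. card (unc \<sigma>)) ` P)"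
    by (metis imageE)
  have "card P * card (unc \<sigma>) \<le> card U * (card U - W) ^ s"
    using card_Min_le_sum[OF P(1), of "\<lambda>\<sigma>. card (unc \<sigma>)"] \<sigma>(2)
      card_uncovered_sum[OF U(1) ball_card, where s = s]
    by (simp add: P_def unc_def)
  then have "real (card U) ^ s * real (card (unc \<sigma>)) \<le> real (card U) * real (card U - W) ^ s"
    unfolding P(3) by (metis of_nat_le_iff of_nat_mult of_nat_power)
  then have unc_le: "real (card (unc \<sigma>)) \<le> real (card U) * (1 - real W / real (card U)) ^ s"
    using U \<open>W \<le> card U\<close> by (simp add: field_simps power_divide of_nat_diff card_gt_0_iff)
  define C where "C = \<sigma> ` {..<s} \<union> unc \<sigma>"
  show thesis
  proof
    show "C \<subseteq> U"
      using \<sigma>(1) by (auto simp: C_def unc_def P_def)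
    show "C \<noteq> {}"
      using U(2) by (cases s) (auto simp: C_def unc_def)
    show "\<exists>c\<in>C. covers c x" if "x \<in> U" for x
      using that covers_refl by (cases "x \<in> unc \<sigma>") (auto simp: C_def unc_def)
    have "card C \<le> s + card (unc \<sigma>)"
      using card_Un_le[of "\<sigma> ` {..<s}" "unc \<sigma>"] card_image_le[of "{..<s}" \<sigma>]
      unfolding C_def by simp
    then show "real (card C) \<le> real s + real (card U) * (1 - real W / real (card U)) ^ s"
      using unc_le by linarith
  qed
qed

lemma one_minus_powr_le:
  fixes p \<delta> :: real
  assumes "0 \<le> p" "p < 1" "0 \<le> \<delta>" "\<delta> \<le> 1"
  shows "(1 - p) powr \<delta> \<le> 1 - \<delta> * p"
  using Youngs_inequality_0[of \<delta> "1 - \<delta>" "1 - p" 1] assms by (simp add: algebra_simps)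

lemma exists_nat_covering_estimate:
  fixes N W :: real
  assumes W: "1 \<le> W" "W \<le> N"
  obtains s :: nat where "real s + N * (1 - W / N) ^ s \<le> N / W * (1 + ln W)"
proof (cases "W = N")
  case True
  then have "real 1 + N * (1 - W / N) ^ 1 \<le> N / W * (1 + ln W)"
    using W by simp
  then show thesis by (rule that)
next
  case False
  define p where "p = W / N"
  have p: "0 < p" "p < 1"
    using W False by (auto simp: p_def)
  define t where "t = ln W / p"
  \<comment> \<open>Already N (1 - p) powr t \<le> N / W; the rounding overshoot \<delta> of s over t is paid for by
    (1 - p) powr \<delta> \<le> 1 - \<delta> p.\<close>
  define s where "s = nat \<lceil>t\<rceil>"
  define \<delta> where "\<delta> = real s - t"
  have "t \<ge> 0"
    using W p by (simp add: t_def)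
  then have \<delta>: "0 \<le> \<delta>" "\<delta> \<le> 1"
    by (auto simp: \<delta>_def s_def) linarith
  have "(1 - p) powr t = exp (t * ln (1 - p))"
    using p by (simp add: powr_def)
  also have "\<dots> \<le> exp (t * (- p))"
    using ln_le_minus_one[of "1 - p"] p \<open>t \<ge> 0\<close> by (intro exp_mono mult_left_mono) auto
  also have "\<dots> = 1 / W"
    using p W by (simp add: t_def exp_minus inverse_eq_divide)
  finally have "(1 - p) powr t \<le> 1 / W" .
  have "(1 - p) ^ s = (1 - p) powr t * (1 - p) powr \<delta>"
    using p by (simp add: \<delta>_def powr_realpow flip: powr_add)
  also have "\<dots> \<le> 1 / W * (1 - \<delta> * p)"
    using \<open>(1 - p) powr t \<le> 1 / W\<close> one_minus_powr_le[OF less_imp_le[OF p(1)] p(2) \<delta>] W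
    by (intro mult_mono) auto
  finally have "(1 - p) ^ s \<le> 1 / W * (1 - \<delta> * p)" .
  then have "N * (1 - p) ^ s \<le> N / W - \<delta>"
    using W p by (simp add: p_def field_simps mult_left_mono)
  then show thesis
    using p W by (intro that[of s]) (simp add: \<delta>_def t_def p_def field_simps)
qed

section \<open>Span and rank over a subfield\<close>

definition lin_span_over :: "'a::field set \<Rightarrow> (nat \<Rightarrow> 'a) \<Rightarrow> nat set \<Rightarrow> 'a set" where
  "lin_span_over K x S = {\<Sum>i\<in>S. c i * x i | c. \<forall>i\<in>S. c i \<in> K}"

locale finite_subfield =
  fixes K :: "'a::{field,finite} set"
  assumes is_subfield: "is_subfield K"
begin

lemma zero_in_K: "0 \<in> K" and one_in_K: "1 \<in> K"
  and add_in_K: "a \<in> K \<Longrightarrow> b \<in> K \<Longrightarrow> a + b \<in> K"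
  and mult_in_K: "a \<in> K \<Longrightarrow> b \<in> K \<Longrightarrow> a * b \<in> K"
  and uminus_in_K: "a \<in> K \<Longrightarrow> - a \<in> K"
  and inverse_in_K: "a \<in> K \<Longrightarrow> inverse a \<in> K"
  using is_subfield unfolding is_subfield_def by (auto simp del: inverse_nonzero_iff_nonzero)

lemma diff_in_K: "a \<in> K \<Longrightarrow> b \<in> K \<Longrightarrow> a - b \<in> K"
  using add_in_K uminus_in_K by (metis diff_conv_add_uminus)

lemma divide_in_K: "a \<in> K \<Longrightarrow> b \<in> K \<Longrightarrow> a / b \<in> K"
  using mult_in_K inverse_in_K by (metis divide_inverse)

lemma card_K_gt_1: "1 < card K"
  using card_mono[of K "{0, 1}"] zero_in_K one_in_K by simp

lemma lin_span_over_eq_image: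
  "lin_span_over K x S = (\<lambda>c. \<Sum>i\<in>S. c i * x i) ` PiE S (\<lambda>_. K)"
proof (intro equalityI subsetI)
  fix y assume "y \<in> lin_span_over K x S"
  then obtain c where "\<forall>i\<in>S. c i \<in> K" "y = (\<Sum>i\<in>S. c i * x i)"
    by (auto simp: lin_span_over_def)
  then show "y \<in> (\<lambda>c. \<Sum>i\<in>S. c i * x i) ` PiE S (\<lambda>_. K)"
    by (intro image_eqI[of _ _ "restrict c S"]) auto
qed (auto simp: lin_span_over_def)

lemma lin_comb_in_lin_span_over:
  assumes "finite T" "\<forall>i\<in>T. c i \<in> K" "\<forall>j\<in>T. x j \<in> lin_span_over K y S"
  shows "(\<Sum>j\<in>T. c j * x j) \<in> lin_span_over K y S"
  using assms
proof (induction T rule: finite_induct)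
  case empty
  show ?case
    using zero_in_K by (auto simp: lin_span_over_def intro!: exI[of _ "\<lambda>_. 0"])
next
  case (insert j T)
  obtain a where a: "\<forall>i\<in>S. a i \<in> K" "x j = (\<Sum>i\<in>S. a i * y i)"
    using insert.prems by (auto simp: lin_span_over_def)
  obtain b where b: "\<forall>i\<in>S. b i \<in> K" "(\<Sum>j\<in>T. c j * x j) = (\<Sum>i\<in>S. b i * y i)"
    using insert by (auto simp: lin_span_over_def)
  have "(\<Sum>j\<in>insert j T. c j * x j) = (\<Sum>i\<in>S. (c j * a i + b i) * y i)"
    using insert.hyps a b
    by (simp add: sum_distrib_left sum.distrib distrib_right mult.assoc)
  moreover have "\<forall>i\<in>S. c j * a i + b i \<in> K"
    using insert.prems a b by (auto intro: add_in_K mult_in_K)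
  ultimately show ?case
    by (auto simp: lin_span_over_def)
qed

lemma coord_in_lin_span_over:
  assumes "finite S" "j \<in> S"
  shows "x j \<in> lin_span_over K x S"
proof -
  have "(\<Sum>i\<in>S. (if i = j then 1 else 0) * x i) = (\<Sum>i\<in>S. if i = j then x i else 0)"
    by (rule sum.cong) auto
  then have "x j = (\<Sum>i\<in>S. (if i = j then 1 else 0) * x i)"
    using assms by simp
  then show ?thesis
    using zero_in_K one_in_K unfolding lin_span_over_def by fastforce
qed

lemma lin_span_over_subset:
  "finite T \<Longrightarrow> \<forall>j\<in>T. x j \<in> lin_span_over K x S \<Longrightarrow> lin_span_over K x T \<subseteq> lin_span_over K x S"
  by (auto simp: lin_span_over_def[of K x T] intro!: lin_comb_in_lin_span_over)

lemma lin_span_over_mono: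
  "finite T \<Longrightarrow> S \<subseteq> T \<Longrightarrow> lin_span_over K x S \<subseteq> lin_span_over K x T"
  by (intro lin_span_over_subset) (auto intro: finite_subset coord_in_lin_span_over)

lemma lin_span_over_cong:
  "\<forall>i\<in>S. x i = y i \<Longrightarrow> lin_span_over K x S = lin_span_over K y S"
  unfolding lin_span_over_def by (metis (no_types, lifting) sum.cong)

lemma card_lin_span_over:
  assumes "finite S" "lin_indep_over K x S"
  shows "card (lin_span_over K x S) = card K ^ card S"
proof -
  have "inj_on (\<lambda>c. \<Sum>i\<in>S. c i * x i) (PiE S (\<lambda>_. K))"
  proof (rule inj_onI)
    fix c d assume c: "c \<in> PiE S (\<lambda>_. K)" and d: "d \<in> PiE S (\<lambda>_. K)"
      and eq: "(\<Sum>i\<in>S. c i * x i) = (\<Sum>i\<in>S. d i * x i)"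
    have "(\<Sum>i\<in>S. (c i - d i) * x i) = 0"
      using eq by (simp add: left_diff_distrib sum_subtractf)
    moreover have "\<forall>i\<in>S. c i - d i \<in> K"
      using c d by (auto intro: diff_in_K)
    ultimately have "\<forall>i\<in>S. c i - d i = 0"
      using assms(2)[unfolded lin_indep_over_def, rule_format, of "\<lambda>i. c i - d i"] by blast
    then show "c = d"
      using c d by (intro PiE_ext) auto
  qed
  then show ?thesis
    using assms(1) by (simp add: lin_span_over_eq_image card_image card_PiE)
qed

lemma lin_indep_over_insert:
  assumes S: "finite S" "lin_indep_over K x S" and j: "x j \<notin> lin_span_over K x S"
  shows "lin_indep_over K x (insert j S)"
  unfolding lin_indep_over_def
proof (intro allI impI)
  fix c assume c: "\<forall>i\<in>insert j S. c i \<in> K" and sum0: "(\<Sum>i\<in>insert j S. c i * x i) = 0"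
  have "j \<notin> S"
    using j S(1) coord_in_lin_span_over by blast
  then have sum0': "c j * x j = - (\<Sum>i\<in>S. c i * x i)"
    using sum0 S(1) by (simp add: eq_neg_iff_add_eq_0)
  have "c j = 0"
  proof (rule ccontr)
    assume "c j \<noteq> 0"
    then have "x j = - (\<Sum>i\<in>S. c i * x i) / c j"
      using sum0' by (simp add: field_simps)
    also have "\<dots> = (\<Sum>i\<in>S. (- c i / c j) * x i)"
      by (simp add: sum_divide_distrib sum_negf)
    finally have "x j = (\<Sum>i\<in>S. (- c i / c j) * x i)" .
    moreover have "\<forall>i\<in>S. - c i / c j \<in> K"
      using c by (auto intro: divide_in_K uminus_in_K)
    ultimately have "x j \<in> lin_span_over K x S"
      unfolding lin_span_over_def by (intro CollectI exI[of _ "\<lambda>i. - c i / c j"]) simp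
    then show False
      using j by contradiction
  qed
  then have "\<forall>i\<in>S. c i = 0"
    using S(2) c sum0' unfolding lin_indep_over_def by auto
  with \<open>c j = 0\<close> show "\<forall>i\<in>insert j S. c i = 0"
    by simp
qed

lemma lin_indep_over_subset:
  assumes "lin_indep_over K x S" "finite S" "T \<subseteq> S"
  shows "lin_indep_over K x T"
  unfolding lin_indep_over_def
proof (intro allI impI)
  fix c assume c: "\<forall>i\<in>T. c i \<in> K" "(\<Sum>i\<in>T. c i * x i) = 0"
  define d where "d i = (if i \<in> T then c i else 0)" for i
  have "(\<Sum>i\<in>S. d i * x i) = (\<Sum>i\<in>T. d i * x i)"
    using assms(2,3) by (intro sum.mono_neutral_right) (auto simp: d_def)
  also have "\<dots> = 0"
    using c(2) by (simp add: d_def)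
  finally have "(\<Sum>i\<in>S. d i * x i) = 0" .
  moreover have "\<forall>i\<in>S. d i \<in> K"
    using c(1) zero_in_K by (auto simp: d_def)
  ultimately have "\<forall>i\<in>S. d i = 0"
    using assms(1)[unfolded lin_indep_over_def, rule_format, of d] by blast
  then show "\<forall>i\<in>T. c i = 0"
    using assms(3) unfolding d_def by (metis subsetD)
qed

lemma rk_ge:
  assumes "S \<subseteq> {0..<n}" "lin_indep_over K x S"
  shows "card S \<le> rk K n x"
proof -
  have "finite {card S |S. S \<subseteq> {0..<n} \<and> lin_indep_over K x S}"
    by (rule finite_subset[of _ "card ` Pow {0..<n}"]) auto
  then show ?thesis
    unfolding rk_def using assms by (auto intro: Max_ge)
qed

lemma rk_attained:
  obtains S where "S \<subseteq> {0..<n}" "lin_indep_over K x S" "card S = rk K n x"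
proof -
  let ?R = "{card S |S. S \<subseteq> {0..<n} \<and> lin_indep_over K x S}"
  have "finite ?R"
    by (rule finite_subset[of _ "card ` Pow {0..<n}"]) auto
  moreover have "card {} \<in> ?R"
    by (intro CollectI exI[of _ "{}"]) (simp add: lin_indep_over_def)
  ultimately have "rk K n x \<in> ?R"
    unfolding rk_def by (intro Max_in) auto
  then obtain S where "rk K n x = card S" "S \<subseteq> {0..<n}" "lin_indep_over K x S"
    by blast
  then show thesis
    using that by simp
qed

lemma rk_basis:
  obtains S where "S \<subseteq> {0..<n}" "lin_indep_over K x S" "card S = rk K n x"
    "lin_span_over K x {0..<n} = lin_span_over K x S"
proof -
  obtain S where S: "S \<subseteq> {0..<n}" "lin_indep_over K x S" "card S = rk K n x"
    using rk_attained .
  have "finite S"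
    using S(1) finite_subset by blast
  have "x j \<in> lin_span_over K x S" if "j < n" for j
  proof (rule ccontr)
    assume "x j \<notin> lin_span_over K x S"
    then have "lin_indep_over K x (insert j S)" "j \<notin> S"
      using lin_indep_over_insert[OF \<open>finite S\<close> S(2)] coord_in_lin_span_over[OF \<open>finite S\<close>]
      by blast+
    then have "card (insert j S) \<le> rk K n x"
      using S(1) that by (intro rk_ge) auto
    then show False
      using \<open>j \<notin> S\<close> \<open>finite S\<close> S(3) by simp
  qed
  then have "lin_span_over K x {0..<n} = lin_span_over K x S"
    using S(1) by (intro equalityI lin_span_over_subset lin_span_over_mono) auto
  with S show thesis
    by (rule that)
qed

lemma card_lin_span_over_rk: "card (lin_span_over K x {0..<n}) = card K ^ rk K n x"
proof -
  obtain S where S: "S \<subseteq> {0..<n}" "lin_indep_over K x S" "card S = rk K n x"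
    "lin_span_over K x {0..<n} = lin_span_over K x S"
    using rk_basis .
  then show ?thesis
    using card_lin_span_over[OF finite_subset[OF S(1)] S(2)] by simp
qed

lemma rk_cong:
  assumes "\<forall>i<n. x i = y i"
  shows "rk K n x = rk K n y"
proof -
  have "(S \<subseteq> {0..<n} \<and> lin_indep_over K x S) \<longleftrightarrow> (S \<subseteq> {0..<n} \<and> lin_indep_over K y S)"
    for S
  proof -
    have "(\<Sum>i\<in>S. c i * x i) = (\<Sum>i\<in>S. c i * y i)" if "S \<subseteq> {0..<n}" for c
      using that assms by (intro sum.cong) auto
    then show ?thesis
      by (auto simp: lin_indep_over_def)
  qed
  then show ?thesis
    by (simp add: rk_def)
qed

lemma rk_0: "rk K 0 x = 0"
proof -
  obtain S where "S \<subseteq> {0..<0}" "lin_indep_over K x S" "card S = rk K 0 x"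
    using rk_attained .
  then show ?thesis
    by simp
qed

lemma rk_le_rk_Suc: "rk K n x \<le> rk K (Suc n) x"
proof -
  obtain S where "S \<subseteq> {0..<n}" "lin_indep_over K x S" "card S = rk K n x"
    using rk_attained .
  moreover have "S \<subseteq> {0..<Suc n}"
    using \<open>S \<subseteq> {0..<n}\<close> by auto
  ultimately show ?thesis
    using rk_ge[of S "Suc n" x] by simp
qed

lemma rk_Suc_le_Suc: "rk K (Suc n) x \<le> Suc (rk K n x)"
proof -
  obtain S where S: "S \<subseteq> {0..<Suc n}" "lin_indep_over K x S" "card S = rk K (Suc n) x"
    using rk_attained .
  have "finite S"
    using S(1) finite_subset by blast
  have "card (S - {n}) \<le> rk K n x"
    using S(1) lin_indep_over_subset[OF S(2) \<open>finite S\<close>] by (intro rk_ge) auto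
  then show ?thesis
    using S(3) \<open>finite S\<close> card_Diff_singleton_if[of S n] by (auto split: if_splits)
qed

lemma rk_Suc:
  "rk K (Suc n) x = (if x n \<in> lin_span_over K x {0..<n} then rk K n x else Suc (rk K n x))"
proof (cases "x n \<in> lin_span_over K x {0..<n}")
  case True
  \<comment> \<open>Comparing the sizes of the spans avoids the exchange lemma.\<close>
  then have "lin_span_over K x {0..<Suc n} \<subseteq> lin_span_over K x {0..<n}"
    by (intro lin_span_over_subset) (auto simp: less_Suc_eq coord_in_lin_span_over)
  then have "card (lin_span_over K x {0..<Suc n}) \<le> card (lin_span_over K x {0..<n})"
    by (rule card_mono[OF finite])
  then have "card K ^ rk K (Suc n) x \<le> card K ^ rk K n x"
    by (simp only: card_lin_span_over_rk)
  then have "rk K (Suc n) x \<le> rk K n x"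
    using power_le_imp_le_exp[OF card_K_gt_1] by blast
  then show ?thesis
    using True rk_le_rk_Suc[of n x] by simp
next
  case False
  obtain S where S: "S \<subseteq> {0..<n}" "lin_indep_over K x S" "card S = rk K n x"
    "lin_span_over K x {0..<n} = lin_span_over K x S"
    using rk_basis .
  have "finite S" "n \<notin> S"
    using S(1) finite_subset by auto
  then have "card (insert n S) \<le> rk K (Suc n) x"
    using False S by (intro rk_ge lin_indep_over_insert) auto
  then show ?thesis
    using False rk_Suc_le_Suc[of n x] S(3) \<open>finite S\<close> \<open>n \<notin> S\<close> by simp
qed

lemma rk_fun_upd:
  "rk K (Suc n) (y(n := a)) =
    (if a \<in> lin_span_over K y {0..<n} then rk K n y else Suc (rk K n y))"
proof -
  have "rk K n (y(n := a)) = rk K n y"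
    by (rule rk_cong) auto
  moreover have "lin_span_over K (y(n := a)) {0..<n} = lin_span_over K y {0..<n}"
    by (rule lin_span_over_cong) auto
  ultimately show ?thesis
    using rk_Suc[of n "y(n := a)"] by (simp only: fun_upd_same)
qed

lemma rk_zero: "rk K n (\<lambda>_. 0) = 0"
proof (induction n)
  case (Suc n)
  have "0 \<in> lin_span_over K (\<lambda>_. 0) {0..<n}"
    using lin_comb_in_lin_span_over[of "{}"] by simp
  then show ?case
    using Suc by (simp add: rk_Suc)
qed (simp add: rk_0)

end

section \<open>Counting vectors by rank\<close>

lemma vecs_0: "vecs 0 = {\<lambda>_. 0}"
  by (auto simp: vecs_def)

lemma zero_in_vecs: "(\<lambda>_. 0) \<in> vecs n"
  by (simp add: vecs_def)

lemma vecs_Suc: "vecs (Suc n) = (\<lambda>(y, a). y(n := a)) ` (vecs n \<times> UNIV)"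
proof (intro equalityI subsetI)
  fix x :: "nat \<Rightarrow> 'a" assume "x \<in> vecs (Suc n)"
  then have "x(n := 0) \<in> vecs n"
    by (auto simp: vecs_def)
  then show "x \<in> (\<lambda>(y, a). y(n := a)) ` (vecs n \<times> UNIV)"
    by (auto intro!: image_eqI[of _ _ "(x(n := 0), x n)"])
qed (auto simp: vecs_def)

lemma finite_vecs: "finite (vecs n :: (nat \<Rightarrow> 'a::{finite,zero}) set)"
  by (induction n) (auto simp: vecs_0 vecs_Suc)

lemma card_filter_vecs_Suc:
  fixes P :: "(nat \<Rightarrow> 'a::{finite,zero}) \<Rightarrow> bool"
  shows "card {x \<in> vecs (Suc n). P x} = (\<Sum>y\<in>vecs n. card {a. P (y(n := a))})"
proof -
  have "{x \<in> vecs (Suc n). P x} = (\<lambda>(y, a). y(n := a)) ` (SIGMA y:vecs n. {a. P (y(n := a))})"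
    unfolding vecs_Suc by auto
  moreover have inj: "inj_on (\<lambda>(y, a). y(n := a)) (vecs n \<times> UNIV)"
  proof (rule inj_onI, clarsimp)
    fix y a z b assume "y \<in> vecs n" "z \<in> vecs n" and eq: "y(n := a) = z(n := b)"
    have "y i = z i" if "i \<noteq> n" for i
      using fun_cong[OF eq, of i] that by simp
    moreover have "y n = z n"
      using \<open>y \<in> vecs n\<close> \<open>z \<in> vecs n\<close> by (simp add: vecs_def)
    ultimately have "y = z"
      by (metis ext)
    then show "y = z \<and> a = b"
      using fun_cong[OF eq, of n] by simp
  qed
  moreover have "inj_on (\<lambda>(y, a). y(n := a)) (SIGMA y:vecs n. {a. P (y(n := a))})"
    using inj by (rule inj_on_subset) auto
  ultimately have "card {x \<in> vecs (Suc n). P x} = card (SIGMA y:vecs n. {a. P (y(n := a))})"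
    by (simp add: card_image)
  also have "\<dots> = (\<Sum>y\<in>vecs n. card {a. P (y(n := a))})"
    by (rule card_SigmaI) (auto simp: finite_vecs)
  finally show ?thesis .
qed

lemma card_vecs: "card (vecs n :: (nat \<Rightarrow> 'a::{finite,zero}) set) = card (UNIV :: 'a set) ^ n"
proof (induction n)
  case (Suc n)
  have "card (vecs (Suc n) :: (nat \<Rightarrow> 'a) set) = (\<Sum>y\<in>(vecs n :: (nat \<Rightarrow> 'a) set). card (UNIV :: 'a set))"
    using card_filter_vecs_Suc[where P = "\<lambda>_ :: nat \<Rightarrow> 'a. True"] by simp
  then show ?case
    by (simp add: Suc.IH mult.commute)
qed (simp add: vecs_0)

lemma alpha_0 [simp]: "alpha q k 0 = 1"
  by (simp add: alpha_def)

lemma gauss_binom_0 [simp]: "gauss_binom q n 0 = 1"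
  by (simp add: gauss_binom_def)

lemma alpha_Suc: "alpha q k (Suc v) = alpha q k v * (real q ^ k - real q ^ v)"
  by (simp add: alpha_def)

lemma alpha_Suc_Suc: "alpha q (Suc k) (Suc v) = (real q ^ Suc k - 1) * real q ^ v * alpha q k v"
proof -
  have "alpha q (Suc k) (Suc v) = (real q ^ Suc k - 1) * (\<Prod>i<v. real q * (real q ^ k - real q ^ i))"
    unfolding alpha_def by (subst prod.lessThan_Suc_shift) (simp add: right_diff_distrib)
  then show ?thesis
    by (simp add: prod.distrib alpha_def)
qed

lemma alpha_diag_pos:
  assumes "1 < q"
  shows "0 < alpha q v v"
  unfolding alpha_def
proof (intro prod_pos ballI)
  fix i assume "i \<in> {..<v}"
  then show "0 < real q ^ v - real q ^ i"
    using assms by (simp add: power_strict_increasing)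
qed

lemma gauss_binom_0_Suc: "gauss_binom q 0 (Suc v) = 0"
  unfolding gauss_binom_def alpha_def by (subst prod.lessThan_Suc_shift) simp

lemma gauss_binom_Suc_Suc:
  assumes "1 < q"
  shows "gauss_binom q (Suc n) (Suc v) = real q ^ Suc v * gauss_binom q n (Suc v) + gauss_binom q n v"
proof -
  have "0 < alpha q v v" "1 < real q ^ Suc v"
    using assms by (simp add: alpha_diag_pos, intro one_less_power) auto
  then show ?thesis
    unfolding gauss_binom_def alpha_Suc_Suc alpha_Suc[of q n v]
    using assms by (simp add: field_simps)
qed

definition rank_count :: "'a::field set \<Rightarrow> nat \<Rightarrow> nat \<Rightarrow> nat" where
  "rank_count K n u = card {x \<in> vecs n. rk K n x = u}"

context finite_subfield
begin

lemma card_rk_fun_upd: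
  "real (card {a. rk K (Suc n) (y(n := a)) = u}) =
    (if rk K n y = u then real (card K) ^ u else 0) +
    (if Suc (rk K n y) = u then real (card (UNIV :: 'a set)) - real (card K) ^ rk K n y else 0)"
proof -
  let ?span = "lin_span_over K y {0..<n}"
  have "{a. rk K (Suc n) (y(n := a)) = u} =
      (if rk K n y = u then ?span else if Suc (rk K n y) = u then UNIV - ?span else {})"
    by (auto simp: rk_fun_upd)
  moreover have "real (card (UNIV - ?span)) = real (card (UNIV :: 'a set)) - real (card K) ^ rk K n y"
    using card_mono[of UNIV ?span]
    by (simp add: card_Diff_subset card_lin_span_over_rk of_nat_diff)
  ultimately show ?thesis
    by (simp add: card_lin_span_over_rk)
qed

lemma sum_vecs_if_rk:
  "(\<Sum>y\<in>vecs n. if rk K n y = u then c else 0) = c * real (rank_count K n u)"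
  by (simp add: sum.If_cases finite_vecs rank_count_def Int_def)

lemma rank_count_Suc_0: "rank_count K (Suc n) 0 = rank_count K n 0"
proof -
  have "real (rank_count K (Suc n) 0) = (\<Sum>y\<in>vecs n. real (card {a. rk K (Suc n) (y(n := a)) = 0}))"
    by (simp add: rank_count_def card_filter_vecs_Suc)
  also have "\<dots> = real (rank_count K n 0)"
    by (simp add: card_rk_fun_upd sum_vecs_if_rk)
  finally show ?thesis
    by simp
qed

lemma rank_count_Suc_Suc:
  "real (rank_count K (Suc n) (Suc v)) = real (card K) ^ Suc v * real (rank_count K n (Suc v))
    + (real (card (UNIV :: 'a set)) - real (card K) ^ v) * real (rank_count K n v)"
proof -
  have "real (rank_count K (Suc n) (Suc v))
      = (\<Sum>y\<in>vecs n. real (card {a. rk K (Suc n) (y(n := a)) = Suc v}))"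
    by (simp add: rank_count_def card_filter_vecs_Suc)
  also have "\<dots> = (\<Sum>y\<in>vecs n. (if rk K n y = Suc v then real (card K) ^ Suc v else 0)
      + (if rk K n y = v then real (card (UNIV :: 'a set)) - real (card K) ^ v else 0))"
    by (rule sum.cong) (auto simp: card_rk_fun_upd)
  also have "\<dots> = real (card K) ^ Suc v * real (rank_count K n (Suc v))
      + (real (card (UNIV :: 'a set)) - real (card K) ^ v) * real (rank_count K n v)"
    by (simp only: sum.distrib sum_vecs_if_rk)
  finally show ?thesis .
qed

lemma rank_count_eq:
  assumes "card K = q" "card (UNIV :: 'a set) = q ^ m"
  shows "real (rank_count K n u) = gauss_binom q n u * alpha q m u"
proof (induction n arbitrary: u)
  case 0
  show ?case
    by (cases u) (simp_all add: rank_count_def vecs_0 rk_0 gauss_binom_0_Suc)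
next
  case (Suc n)
  have "1 < q"
    using card_K_gt_1 assms(1) by simp
  show ?case
  proof (cases u)
    case 0
    then show ?thesis
      using Suc by (simp add: rank_count_Suc_0)
  next
    case (Suc v)
    then show ?thesis
      using \<open>1 < q\<close> assms Suc.IH
      by (simp add: rank_count_Suc_Suc gauss_binom_Suc_Suc alpha_Suc algebra_simps)
  qed
qed

lemma card_rank_ball: "card {x \<in> vecs n. rk K n x \<le> r} = (\<Sum>u\<le>r. rank_count K n u)"
proof (induction r)
  case (Suc r)
  have "{x \<in> vecs n. rk K n x \<le> Suc r} = {x \<in> vecs n. rk K n x \<le> r} \<union> {x \<in> vecs n. rk K n x = Suc r}"
    by auto
  also have "card \<dots> = card {x \<in> vecs n. rk K n x \<le> r} + rank_count K n (Suc r)"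
    unfolding rank_count_def by (intro card_Un_disjoint) (auto intro: finite_subset[OF _ finite_vecs])
  finally show ?case
    using Suc by simp
qed (simp add: rank_count_def)

lemma V_eq_card_rank_ball:
  assumes "card K = q" "card (UNIV :: 'a set) = q ^ m"
  shows "V q m n r = real (card {x \<in> vecs n. rk K n x \<le> r})"
  by (simp add: V_def card_rank_ball rank_count_eq[OF assms] atMost_atLeast0)

lemma d_R_self: "d_R K n x x = 0"
  by (simp add: d_R_def rk_zero)

lemma card_rank_ball_pos: "0 < card {x \<in> vecs n. rk K n x \<le> r}"
proof -
  have "(\<lambda>_. 0) \<in> {x \<in> vecs n. rk K n x \<le> r}"
    by (simp add: zero_in_vecs rk_zero)
  then show ?thesis
    by (auto simp: card_gt_0_iff finite_vecs)
qed

end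

section \<open>Rank balls and covering codes\<close>

lemma card_d_R_ball:
  fixes K :: "'a::field set"
  assumes "x \<in> vecs n"
  shows "card {c \<in> vecs n. d_R K n x c \<le> r} = card {y \<in> vecs n. rk K n y \<le> r}"
proof -
  have "bij_betw (\<lambda>c i. x i - c i) {c \<in> vecs n. d_R K n x c \<le> r} {y \<in> vecs n. rk K n y \<le> r}"
    by (rule bij_betw_byWitness[where f' = "\<lambda>y i. x i - y i"])
      (use assms in \<open>auto simp: vecs_def d_R_def\<close>)
  then show ?thesis
    by (rule bij_betw_same_card)
qed

lemma covering_radius_le:
  fixes K :: "'a::{field,finite} set"
  assumes "finite C" "C \<noteq> {}" "\<And>x. x \<in> vecs n \<Longrightarrow> \<exists>c\<in>C. d_R K n x c \<le> r"
  shows "covering_radius K n C \<le> r"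
  unfolding covering_radius_def using assms zero_in_vecs
  by (subst Max_le_iff) (auto simp: finite_vecs Min_le_iff)

lemma K_R_le_card:
  fixes K :: "'a::{field,finite} set"
  assumes "C \<subseteq> vecs n" "C \<noteq> {}" "covering_radius K n C \<le> r"
  shows "K_R K n r \<le> card C"
proof -
  have "finite {card C |C. C \<subseteq> (vecs n :: (nat \<Rightarrow> 'a) set) \<and> C \<noteq> {} \<and> covering_radius K n C \<le> r}"
    by (rule finite_subset[of _ "card ` Pow (vecs n)"]) (auto simp: finite_vecs)
  then show ?thesis
    unfolding K_R_def using assms by (auto intro: Min_le)
qed

theorem proposition12:
  fixes K :: "'a::{field,finite} set" and q m n \<rho> :: nat
  assumes "is_subfield K"
    and "card K = q"
    and "card (UNIV :: 'a set) = q ^ m"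
    and "n \<le> m"
    and "0 < \<rho>" and "\<rho> < n"
  shows "real (K_R K n \<rho>) \<le> real q ^ (m * n) / V q m n \<rho> * (1 + ln (V q m n \<rho>))"
proof -
  interpret finite_subfield K
    using assms(1) by unfold_locales
  let ?U = "vecs n :: (nat \<Rightarrow> 'a) set"
  define W where "W = card {y \<in> ?U. rk K n y \<le> \<rho>}"
  have V: "V q m n \<rho> = real W" and N: "real (card ?U) = real q ^ (m * n)"
    using V_eq_card_rank_ball[OF assms(2,3)] assms(3)
    by (simp_all add: W_def card_vecs power_mult)
  have "1 \<le> real W"
    using card_rank_ball_pos[of n \<rho>] by (simp add: W_def)
  moreover have "real W \<le> real (card ?U)"
    unfolding W_def by (simp add: card_mono finite_vecs)
  ultimately obtain s :: nat
    where s: "real s + card ?U * (1 - W / card ?U) ^ s \<le> card ?U / W * (1 + ln W)"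
    by (rule exists_nat_covering_estimate)
  obtain C where C: "C \<subseteq> ?U" "C \<noteq> {}" "\<And>x. x \<in> ?U \<Longrightarrow> \<exists>c\<in>C. d_R K n x c \<le> \<rho>"
    "real (card C) \<le> real s + card ?U * (1 - W / card ?U) ^ s"
    by (rule exists_covering_subset[of ?U "\<lambda>c x. d_R K n x c \<le> \<rho>" W])
      (use zero_in_vecs in \<open>auto simp: finite_vecs d_R_self card_d_R_ball W_def\<close>)
  then have "K_R K n \<rho> \<le> card C"
    by (intro K_R_le_card covering_radius_le) (auto intro: finite_subset[OF _ finite_vecs])
  then show ?thesis
    using C(4) s unfolding V N by linarith
qed

end
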